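(* Let $d_2,a_2,h,q>0$, $0<x_2\le L$, and let $\bar w$ be the unique positive solution of $d_2w''-a_2w'+h-qw=0$ on $(0,x_2)$ with $d_2w'(0)-a_2w(0)=0$ and $d_2w'(x_2)-a_2w(x_2)=0$. Then: (i) $0<\bar w_x<\frac{a_2}{d_2}\bar w$ in $(0,x_2)$; (ii) $\bar w$ is strictly increasing with respect to $h$; (iii) $\lim_{h\to0}\bar w=0$ and $\lim_{h\to+\infty}\bar w=+\infty$ uniformly on $[0,x_2]$; (iv) $\bar w$ is strictly decreasing with respect to $q$; (v) $\lim_{q\to0}\bar w=+\infty$ and $\lim_{q\to+\infty}\bar w=0$ uniformly on $[0,x_2]$.
   Context: Monotonicity with respect to a parameter means that, for each fixed $x$ in $(0,x_2)$, $\bar w(x)$ is strictly monotone as a function of that parameter with all other parameters fixed. *)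

theory Defs
  imports "HOL-Analysis.Analysis"
begin

definition bvp_pos_sol :: "real \<Rightarrow> real \<Rightarrow> real \<Rightarrow> real \<Rightarrow> real \<Rightarrow> (real \<Rightarrow> real) \<Rightarrow> bool" where
  "bvp_pos_sol d2 a2 h q x2 w \<longleftrightarrow>
     (\<exists>w' w''.
        (\<forall>x\<in>{0..x2}. (w has_real_derivative w' x) (at x within {0..x2})) \<and>
        continuous_on {0..x2} w' \<and>
        (\<forall>x\<in>{0<..<x2}. (w' has_real_derivative w'' x) (at x)) \<and>
        (\<forall>x\<in>{0<..<x2}. d2 * w'' x - a2 * w' x + h - q * w x = 0) \<and>
        d2 * w' 0 - a2 * w 0 = 0 \<and>
        d2 * w' x2 - a2 * w x2 = 0 \<and>
        (\<forall>x\<in>{0..x2}. w x > 0))"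

text \<open>The unique positive solution, as a function on [0,x2]; to make it a
  well-defined single function we use the convention that it is 0 outside [0,x2].\<close>
definition wbar :: "real \<Rightarrow> real \<Rightarrow> real \<Rightarrow> real \<Rightarrow> real \<Rightarrow> real \<Rightarrow> real" where
  "wbar d2 a2 h q x2 =
     (THE w. bvp_pos_sol d2 a2 h q x2 w \<and> (\<forall>x. x \<notin> {0..x2} \<longrightarrow> w x = 0))"

end

theory Submission
  imports Defs
begin

text \<open>
  The problem can be solved explicitly: with r2 < 0 < r1 the roots of d r^2 - a r - q = 0,
  w = h/q + A e^(r1 x) + B e^(r2 x), where A, B are chosen so that the flux z = d w' - a w,
  a positive combination of e^(r1 x) and e^(r2 x) minus a h/q, vanishes at 0 and x2; in
  particular w' > 0. It is the only solution: for the difference v of two solutions and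
  z = d v' - a v, the energy e^(-a x/d) z v vanishes at both ends and has derivative
  e^(-a x/d) (q v^2 + z^2/d) >= 0, so v = 0.
  Since z' = q w - h is increasing, z < 0 inside, which is the upper bound in (i). It also
  makes e^(-a x/d) w decreasing, and the mean value theorem for z gives w(xi) = h/q somewhere,
  so h/q and w(x) are within a factor e^(a x2/d) of each other; this yields the limits in
  (iii) and (v). The monotonicity in h and q follows from the strong maximum principle for
  the Robin problem, obtained from the Neumann case through the substitution u = e^(-a x/d) v.
\<close>

definition twice_deriv_on :: "real \<Rightarrow> (real \<Rightarrow> real) \<Rightarrow> (real \<Rightarrow> real) \<Rightarrow> (real \<Rightarrow> real) \<Rightarrow> bool"
  where "twice_deriv_on X v v' v'' \<longleftrightarrow>
     (\<forall>x\<in>{0..X}. (v has_real_derivative v' x) (at x within {0..X})) \<and>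
     continuous_on {0..X} v' \<and>
     (\<forall>x\<in>{0<..<X}. (v' has_real_derivative v'' x) (at x))"

lemma twice_deriv_onD:
  assumes "twice_deriv_on X v v' v''"
  shows "continuous_on {0..X} v" "continuous_on {0..X} v'"
    and "x \<in> {0<..<X} \<Longrightarrow> (v has_real_derivative v' x) (at x)"
    and "x \<in> {0<..<X} \<Longrightarrow> (v' has_real_derivative v'' x) (at x)"
proof -
  have dv: "\<And>x. x \<in> {0..X} \<Longrightarrow> (v has_real_derivative v' x) (at x within {0..X})"
    using assms by (simp add: twice_deriv_on_def)
  then show "continuous_on {0..X} v"
    using DERIV_continuous continuous_on_eq_continuous_within by blast
  show "x \<in> {0<..<X} \<Longrightarrow> (v has_real_derivative v' x) (at x)"
    using dv[of x] at_within_Icc_at[of 0 x X] by simp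
qed (use assms in \<open>auto simp: twice_deriv_on_def\<close>)

lemma twice_deriv_on_diff:
  assumes "twice_deriv_on X v v' v''" "twice_deriv_on X w w' w''"
  shows "twice_deriv_on X (\<lambda>x. v x - w x) (\<lambda>x. v' x - w' x) (\<lambda>x. v'' x - w'' x)"
  using assms unfolding twice_deriv_on_def
  by (auto intro!: derivative_intros continuous_intros)

lemma twice_deriv_on_cong:
  assumes "twice_deriv_on X v v' v''" "\<And>x. x \<in> {0..X} \<Longrightarrow> v x = w x"
  shows "twice_deriv_on X w v' v''"
  using assms unfolding twice_deriv_on_def
  by (auto intro: has_field_derivative_transform_within[OF _ zero_less_one]
      has_field_derivative_transform_within_open[OF _ open_greaterThanLessThan])

lemma twice_deriv_on_exp_mult:
  assumes "twice_deriv_on X v v' v''"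
  shows "twice_deriv_on X (\<lambda>x. exp (c * x) * v x) (\<lambda>x. exp (c * x) * (v' x + c * v x))
           (\<lambda>x. exp (c * x) * (v'' x + 2 * c * v' x + c\<^sup>2 * v x))"
  unfolding twice_deriv_on_def
proof (intro conjI ballI)
  show "((\<lambda>x. exp (c * x) * v x) has_real_derivative exp (c * x) * (v' x + c * v x))
          (at x within {0..X})" if "x \<in> {0..X}" for x
    using assms that unfolding twice_deriv_on_def
    by (auto intro!: derivative_eq_intros simp: algebra_simps)
  show "continuous_on {0..X} (\<lambda>x. exp (c * x) * (v' x + c * v x))"
    using twice_deriv_onD(1,2)[OF assms] by (intro continuous_intros)
  show "((\<lambda>x. exp (c * x) * (v' x + c * v x)) has_real_derivative
          exp (c * x) * (v'' x + 2 * c * v' x + c\<^sup>2 * v x)) (at x)" if "x \<in> {0<..<X}" for x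
    using twice_deriv_onD(3,4)[OF assms that]
    by (auto intro!: derivative_eq_intros simp: algebra_simps power2_eq_square)
qed

lemma bvp_pos_sol_iff:
  "bvp_pos_sol d a h q X w \<longleftrightarrow>
     (\<exists>w' w''. twice_deriv_on X w w' w'' \<and>
        (\<forall>x\<in>{0<..<X}. d * w'' x - a * w' x + h - q * w x = 0) \<and>
        d * w' 0 - a * w 0 = 0 \<and> d * w' X - a * w X = 0 \<and> (\<forall>x\<in>{0..X}. 0 < w x))"
  unfolding bvp_pos_sol_def twice_deriv_on_def by blast

lemma deriv_eq_0_at_interior_min:
  fixes f :: "real \<Rightarrow> real"
  assumes "(f has_real_derivative l) (at m)" "m \<in> {a<..<b}" "\<And>y. y \<in> {a..b} \<Longrightarrow> f m \<le> f y"
  shows "l = 0"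
proof (rule DERIV_local_min[OF assms(1)])
  show "0 < min (m - a) (b - m)" using assms(2) by simp
  show "\<forall>y. \<bar>m - y\<bar> < min (m - a) (b - m) \<longrightarrow> f m \<le> f y"
    using assms(3) by (auto simp: abs_if split: if_splits)
qed

lemma deriv_eq_0_if_deriv_nonneg_zero_ends:
  fixes F F' :: "real \<Rightarrow> real"
  assumes cont: "continuous_on {a..b} F"
    and dF: "\<And>x. x \<in> {a<..<b} \<Longrightarrow> (F has_real_derivative F' x) (at x)"
    and nonneg: "\<And>x. x \<in> {a<..<b} \<Longrightarrow> 0 \<le> F' x"
    and "F a = 0" "F b = 0" "y \<in> {a<..<b}"
  shows "F' y = 0"
proof -
  have mono: "F y1 \<le> F y2" if "a \<le> y1" "y1 \<le> y2" "y2 \<le> b" for y1 y2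
  proof (rule DERIV_nonneg_imp_increasing_open[OF \<open>y1 \<le> y2\<close>])
    show "\<exists>l. (F has_real_derivative l) (at x) \<and> 0 \<le> l" if "y1 < x" "x < y2" for x
      using dF[of x] nonneg[of x] that \<open>a \<le> y1\<close> \<open>y2 \<le> b\<close> by auto
    show "continuous_on {y1..y2} F" using continuous_on_subset[OF cont] that by auto
  qed
  have "F x = 0" if "x \<in> {a..b}" for x
    using mono[of a x] mono[of x b] that \<open>F a = 0\<close> \<open>F b = 0\<close> by auto
  then have "\<forall>x. \<bar>y - x\<bar> < min (y - a) (b - y) \<longrightarrow> F y = F x"
    using \<open>y \<in> {a<..<b}\<close> by (auto simp: abs_if split: if_splits)
  moreover have "0 < min (y - a) (b - y)" using \<open>y \<in> {a<..<b}\<close> by simp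
  ultimately show ?thesis
    using DERIV_local_const[OF dF[OF \<open>y \<in> {a<..<b}\<close>]] by blast
qed

lemma strict_max_at_critical_point_if_deriv2_neg:
  fixes u u' u'' :: "real \<Rightarrow> real"
  assumes "s \<le> m" "m \<le> t" "y \<in> {s..t}" "y \<noteq> m"
    and cont: "continuous_on {s..t} u" "continuous_on {s..t} u'"
    and du: "\<And>x. x \<in> {s<..<t} \<Longrightarrow> (u has_real_derivative u' x) (at x)"
    and du': "\<And>x. x \<in> {s<..<t} \<Longrightarrow> (u' has_real_derivative u'' x) (at x)"
    and neg: "\<And>x. x \<in> {s<..<t} \<Longrightarrow> u'' x < 0"
    and crit: "u' m = 0"
  shows "u y < u m"
proof -
  have u'_dec: "u' x2 < u' x1" if "s \<le> x1" "x1 < x2" "x2 \<le> t" for x1 x2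
  proof (rule DERIV_neg_imp_decreasing_open[OF \<open>x1 < x2\<close>])
    show "\<exists>l. (u' has_real_derivative l) (at x) \<and> l < 0" if "x1 < x" "x < x2" for x
      using du'[of x] neg[of x] that \<open>s \<le> x1\<close> \<open>x2 \<le> t\<close> by auto
    show "continuous_on {x1..x2} u'"
      using continuous_on_subset[OF cont(2)] that by auto
  qed
  show ?thesis
  proof (cases "m < y")
    case True
    show ?thesis
    proof (rule DERIV_neg_imp_decreasing_open[OF True])
      show "\<exists>l. (u has_real_derivative l) (at x) \<and> l < 0" if "m < x" "x < y" for x
        using du[of x] u'_dec[of m x] crit that assms(1-3) by auto
      show "continuous_on {m..y} u"
        using continuous_on_subset[OF cont(1)] assms(1-3) by auto
    qed
  next
    case False
    then have "y < m" using \<open>y \<noteq> m\<close> by simp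
    show ?thesis
    proof (rule DERIV_pos_imp_increasing_open[OF \<open>y < m\<close>])
      show "\<exists>l. (u has_real_derivative l) (at x) \<and> 0 < l" if "y < x" "x < m" for x
        using du[of x] u'_dec[of x m] crit that assms(1-3) by auto
      show "continuous_on {y..m} u"
        using continuous_on_subset[OF cont(1)] assms(1-3) by auto
    qed
  qed
qed

lemma neg_between_zeros_if_deriv_strict_mono:
  fixes f f' :: "real \<Rightarrow> real"
  assumes df: "\<And>y. a \<le> y \<Longrightarrow> y \<le> b \<Longrightarrow> (f has_real_derivative f' y) (at y)"
    and mono: "\<And>y z. a \<le> y \<Longrightarrow> y < z \<Longrightarrow> z \<le> b \<Longrightarrow> f' y < f' z"
    and "f a = 0" "f b = 0" "a < x" "x < b"
  shows "f x < 0"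
proof -
  obtain \<xi>1 where "a < \<xi>1" "\<xi>1 < x" and \<xi>1: "f x - f a = (x - a) * f' \<xi>1"
    using MVT2[OF \<open>a < x\<close>, of f f'] df \<open>x < b\<close> by auto
  obtain \<xi>2 where "x < \<xi>2" "\<xi>2 < b" and \<xi>2: "f b - f x = (b - x) * f' \<xi>2"
    using MVT2[OF \<open>x < b\<close>, of f f'] df \<open>a < x\<close> by auto
  have "f' \<xi>1 < f' \<xi>2"
    using mono \<open>a < \<xi>1\<close> \<open>\<xi>1 < x\<close> \<open>x < \<xi>2\<close> \<open>\<xi>2 < b\<close> by auto
  show ?thesis
  proof (rule ccontr)
    assume "\<not> f x < 0"
    then have "0 \<le> (x - a) * f' \<xi>1" "(b - x) * f' \<xi>2 \<le> 0"
      using \<xi>1 \<xi>2 \<open>f a = 0\<close> \<open>f b = 0\<close> by auto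
    then have "0 \<le> f' \<xi>1" "f' \<xi>2 \<le> 0"
      using \<open>a < x\<close> \<open>x < b\<close> by (simp_all add: zero_le_mult_iff mult_le_0_iff)
    then show False using \<open>f' \<xi>1 < f' \<xi>2\<close> by simp
  qed
qed

lemma uniform_limit_null_if_bounded:
  fixes f :: "'a \<Rightarrow> 'b \<Rightarrow> real"
  assumes "\<forall>\<^sub>F t in F. \<forall>x\<in>S. \<bar>f t x\<bar> \<le> g t" "(g \<longlongrightarrow> 0) F"
  shows "uniform_limit S f (\<lambda>_. 0) F"
proof (rule uniform_limit_null_comparison[where g = "\<lambda>t _. g t"])
  show "\<forall>\<^sub>F t in F. \<forall>x\<in>S. norm (f t x) \<le> g t" using assms(1) by simp
  show "uniform_limit S (\<lambda>t _. g t) (\<lambda>_. 0) F"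
    using tendstoD[OF assms(2)] by (auto simp: uniform_limit_iff elim: eventually_mono)
qed

lemma eventually_uniformly_gt_if_lower_bound:
  fixes f :: "'a \<Rightarrow> 'b \<Rightarrow> real"
  assumes "\<forall>\<^sub>F t in F. \<forall>x\<in>S. g t \<le> f t x" "filterlim g at_top F"
  shows "\<forall>\<^sub>F t in F. \<forall>x\<in>S. M < f t x"
  using assms(1) filterlim_at_top_dense[THEN iffD1, OF assms(2), rule_format, of M]
  by eventually_elim auto

section \<open>Maximum principle and uniqueness\<close>

lemma neumann_max_principle:
  fixes u u' u'' E :: "real \<Rightarrow> real"
  assumes X: "0 < X" and u: "twice_deriv_on X u u' u''"
    and cont_E: "continuous_on {0..X} E" and u'': "\<And>x. x \<in> {0<..<X} \<Longrightarrow> u'' x = E x"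
    and E_neg: "\<And>x. x \<in> {0..X} \<Longrightarrow> u x \<le> 0 \<Longrightarrow> u' x = 0 \<Longrightarrow> E x < 0"
    and bc: "u' 0 = 0" "u' X = 0"
    and x: "x \<in> {0..X}"
  shows "0 < u x"
proof (rule ccontr)
  assume "\<not> 0 < u x"
  obtain m where m: "m \<in> {0..X}" and min: "\<And>y. y \<in> {0..X} \<Longrightarrow> u m \<le> u y"
    using continuous_attains_inf[OF compact_Icc _ twice_deriv_onD(1)[OF u]] X by auto
  have "u m \<le> 0" using min[OF x] \<open>\<not> 0 < u x\<close> by simp
  have "u' m = 0"
    using m bc deriv_eq_0_at_interior_min[OF twice_deriv_onD(3)[OF u] _ min]
    by (cases "m \<in> {0<..<X}") auto
  then have "E m < 0" using E_neg m \<open>u m \<le> 0\<close> by blast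
  then obtain \<delta> where "0 < \<delta>"
    and \<delta>: "\<And>y. y \<in> {0..X} \<Longrightarrow> dist y m < \<delta> \<Longrightarrow> dist (E y) (E m) < - E m"
    using cont_E m unfolding continuous_on_iff by (meson neg_0_less_iff_less)
  have E_neg_near_m: "E y < 0" if "y \<in> {0..X}" "dist y m < \<delta>" for y
    using \<delta>[OF that] by (simp add: dist_real_def)
  define s where "s = max 0 (m - \<delta> / 2)"
  define t where "t = min X (m + \<delta> / 2)"
  define y where "y = (if m = s then t else s)"
  have "s \<le> m" "m \<le> t" "s < t" "{s..t} \<subseteq> {0..X}"
    using m X \<open>0 < \<delta>\<close> by (auto simp: s_def t_def)
  then have "y \<in> {s..t}" "y \<noteq> m" by (auto simp: y_def)
  have "u y < u m"
  proof (rule strict_max_at_critical_point_if_deriv2_neg[OF \<open>s \<le> m\<close> \<open>m \<le> t\<close> \<open>y \<in> {s..t}\<close> \<open>y \<noteq> m\<close>])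
    show "continuous_on {s..t} u" "continuous_on {s..t} u'"
      using twice_deriv_onD(1,2)[OF u] \<open>{s..t} \<subseteq> {0..X}\<close> by (auto intro: continuous_on_subset)
    show "(u has_real_derivative u' z) (at z)" "(u' has_real_derivative u'' z) (at z)"
      if "z \<in> {s<..<t}" for z
      using twice_deriv_onD(3,4)[OF u, of z] that \<open>{s..t} \<subseteq> {0..X}\<close> by auto
    show "u'' z < 0" if "z \<in> {s<..<t}" for z
      using that \<open>{s..t} \<subseteq> {0..X}\<close> u''[of z] E_neg_near_m[of z]
      by (auto simp: s_def t_def dist_real_def)
  qed fact
  then show False using min[of y] \<open>y \<in> {s..t}\<close> \<open>{s..t} \<subseteq> {0..X}\<close> by auto
qed

lemma robin_max_principle:
  fixes v v' v'' g :: "real \<Rightarrow> real"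
  assumes d: "0 < d" and q: "0 \<le> q" and X: "0 < X" and v: "twice_deriv_on X v v' v''"
    and ode: "\<And>x. x \<in> {0<..<X} \<Longrightarrow> d * v'' x - a * v' x - q * v x + g x = 0"
    and cont_g: "continuous_on {0..X} g" and g_pos: "\<And>x. x \<in> {0..X} \<Longrightarrow> 0 < g x"
    and bc: "d * v' 0 - a * v 0 = 0" "d * v' X - a * v X = 0"
    and x: "x \<in> {0..X}"
  shows "0 < v x"
proof -
  define c where "c = - a / d"
  \<comment> \<open>This substitution turns the Robin conditions into Neumann conditions.\<close>
  define u where "u x = exp (c * x) * v x" for x
  define u' where "u' x = exp (c * x) * (v' x + c * v x)" for x
  define u'' where "u'' x = exp (c * x) * (v'' x + 2 * c * v' x + c\<^sup>2 * v x)" for x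
  define E where "E x = (q * u x - a * u' x - exp (c * x) * g x) / d" for x
  have u: "twice_deriv_on X u u' u''"
    unfolding u_def[abs_def] u'_def[abs_def] u''_def[abs_def]
    by (rule twice_deriv_on_exp_mult[OF v])
  have "continuous_on {0..X} E"
    unfolding E_def u_def u'_def using twice_deriv_onD(1,2)[OF v] cont_g d
    by (intro continuous_intros) auto
  moreover have "u'' x = E x" if "x \<in> {0<..<X}" for x
  proof -
    have "d * u'' x - (q * u x - a * u' x - exp (c * x) * g x)
        = exp (c * x) * (d * v'' x - a * v' x - q * v x + g x)"
      using d by (simp add: u''_def u'_def u_def c_def field_simps power2_eq_square)
    also have "\<dots> = 0" using ode[OF that] by simp
    finally show ?thesis using d by (simp add: E_def field_simps)
  qed
  moreover have "E x < 0" if "x \<in> {0..X}" "u x \<le> 0" "u' x = 0" for x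
  proof -
    have "q * u x \<le> 0" "0 < exp (c * x) * g x"
      using that g_pos[of x] q by (simp_all add: mult_nonneg_nonpos)
    then show ?thesis using d \<open>u' x = 0\<close> by (simp add: E_def divide_neg_pos)
  qed
  moreover have "u' 0 = 0" "u' X = 0" using bc d by (simp_all add: u'_def c_def field_simps)
  ultimately have "0 < u x" by (intro neumann_max_principle[OF X u _ _ _ _ _ x])
  then show ?thesis by (simp add: u_def zero_less_mult_iff)
qed

lemma robin_homogeneous_eq_0:
  fixes v v' v'' :: "real \<Rightarrow> real"
  assumes d: "0 < d" and q: "0 < q" and X: "0 < X" and v: "twice_deriv_on X v v' v''"
    and ode: "\<And>x. x \<in> {0<..<X} \<Longrightarrow> d * v'' x - a * v' x - q * v x = 0"
    and bc: "d * v' 0 - a * v 0 = 0" "d * v' X - a * v X = 0"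
    and x: "x \<in> {0..X}"
  shows "v x = 0"
proof -
  define k where "k = a / d"
  define z where "z x = d * v' x - a * v x" for x
  define F where "F x = exp (- k * x) * z x * v x" for x
  define F' where "F' x = exp (- k * x) * (q * (v x)\<^sup>2 + (z x)\<^sup>2 / d)" for x
  have F': "(F has_real_derivative F' x) (at x)" if "x \<in> {0<..<X}" for x
  proof -
    have "(z has_real_derivative q * v x) (at x)"
      unfolding z_def[abs_def] using twice_deriv_onD(3,4)[OF v that] ode[OF that]
      by (auto intro!: derivative_eq_intros simp: algebra_simps)
    then have "(F has_real_derivative
        exp (- k * x) * (q * v x * v x + z x * (v' x - k * v x))) (at x)"
      unfolding F_def[abs_def] using twice_deriv_onD(3)[OF v that]
      by (auto intro!: derivative_eq_intros simp: algebra_simps)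
    moreover have "v' x - k * v x = z x / d" using d by (simp add: z_def k_def field_simps)
    ultimately show ?thesis by (simp add: F'_def power2_eq_square mult.assoc)
  qed
  have "F' y = 0" if "y \<in> {0<..<X}" for y
  proof (rule deriv_eq_0_if_deriv_nonneg_zero_ends[OF _ F' _ _ _ that])
    show "continuous_on {0..X} F"
      unfolding F_def z_def using twice_deriv_onD(1,2)[OF v] by (intro continuous_intros)
  qed (use q d bc in \<open>simp_all add: F'_def F_def z_def\<close>)
  then have "v y = 0" if "y \<in> {0<..<X}" for y
    using that q d by (simp add: F'_def add_nonneg_eq_0_iff)
  then show ?thesis
    using continuous_constant_on_closure[of "{0<..<X}" v 0 x] twice_deriv_onD(1)[OF v] X x
    by (simp add: closure_greaterThanLessThan)
qed

section \<open>The explicit solution\<close>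

locale robin_bvp =
  fixes d a h q X :: real
  assumes d_pos: "0 < d" and a_pos: "0 < a" and h_pos: "0 < h" and q_pos: "0 < q"
    and X_pos: "0 < X"
begin

definition r1 :: real where "r1 = (a + sqrt (a\<^sup>2 + 4 * d * q)) / (2 * d)"
definition r2 :: real where "r2 = (a - sqrt (a\<^sup>2 + 4 * d * q)) / (2 * d)"

lemma char_poly_roots: "d * r1\<^sup>2 - a * r1 = q" "d * r2\<^sup>2 - a * r2 = q"
proof -
  have "(sqrt (a\<^sup>2 + 4 * d * q))\<^sup>2 = a\<^sup>2 + 4 * d * q"
    using d_pos q_pos by simp
  then show "d * r1\<^sup>2 - a * r1 = q" "d * r2\<^sup>2 - a * r2 = q"
    using d_pos by (simp_all add: r1_def r2_def field_simps power2_eq_square)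
qed

lemma r2_neg_r1_pos: "r2 < 0" "0 < r1"
proof -
  have "a < sqrt (a\<^sup>2 + 4 * d * q)"
    using d_pos q_pos by (intro real_less_rsqrt) simp
  then show "r2 < 0" "0 < r1" using a_pos d_pos by (simp_all add: r1_def r2_def divide_neg_pos)
qed

text \<open>\<open>\<alpha>\<close> and \<open>\<beta>\<close> make the flux \<open>d * sol' x - a * sol x\<close> (lemma \<open>sol_flux\<close>) vanish at 0 and X.\<close>

definition \<alpha> :: real
  where "\<alpha> = a * h / q * (1 - exp (r2 * X)) / (exp (r1 * X) - exp (r2 * X))"
definition \<beta> :: real
  where "\<beta> = a * h / q * (exp (r1 * X) - 1) / (exp (r1 * X) - exp (r2 * X))"

lemma exp_r2_less_1_less_exp_r1: "exp (r2 * X) < 1" "1 < exp (r1 * X)"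
  using r2_neg_r1_pos X_pos by (simp_all add: mult_neg_pos)

lemma coeffs_pos: "0 < \<alpha>" "0 < \<beta>"
  using exp_r2_less_1_less_exp_r1 a_pos h_pos q_pos by (simp_all add: \<alpha>_def \<beta>_def)

lemma coeffs_boundary:
  "\<alpha> + \<beta> = a * h / q" "\<alpha> * exp (r1 * X) + \<beta> * exp (r2 * X) = a * h / q"
proof -
  have "c * (1 - E2) / (E1 - E2) + c * (E1 - 1) / (E1 - E2) = c"
    "c * (1 - E2) / (E1 - E2) * E1 + c * (E1 - 1) / (E1 - E2) * E2 = c"
    if "E1 \<noteq> E2" for c E1 E2 :: real
    using that by (simp_all add: divide_simps) (simp_all add: algebra_simps)
  moreover have "exp (r1 * X) \<noteq> exp (r2 * X)" using exp_r2_less_1_less_exp_r1 by linarith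
  ultimately show "\<alpha> + \<beta> = a * h / q" "\<alpha> * exp (r1 * X) + \<beta> * exp (r2 * X) = a * h / q"
    unfolding \<alpha>_def \<beta>_def by blast+
qed

definition sol :: "real \<Rightarrow> real"
  where "sol x = h / q + \<alpha> * r1 / q * exp (r1 * x) + \<beta> * r2 / q * exp (r2 * x)"
definition sol' :: "real \<Rightarrow> real"
  where "sol' x = \<alpha> * r1\<^sup>2 / q * exp (r1 * x) + \<beta> * r2\<^sup>2 / q * exp (r2 * x)"
definition sol'' :: "real \<Rightarrow> real"
  where "sol'' x = \<alpha> * r1 ^ 3 / q * exp (r1 * x) + \<beta> * r2 ^ 3 / q * exp (r2 * x)"

lemma has_real_derivative_sol: "(sol has_real_derivative sol' x) (at x)"
  unfolding sol_def[abs_def] sol'_def using q_pos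
  by (auto intro!: derivative_eq_intros simp: field_simps power2_eq_square)

lemma has_real_derivative_sol': "(sol' has_real_derivative sol'' x) (at x)"
  unfolding sol'_def[abs_def] sol''_def using q_pos
  by (auto intro!: derivative_eq_intros simp: field_simps power2_eq_square power3_eq_cube)

lemma sol_ode: "d * sol'' x - a * sol' x + h - q * sol x = 0"
proof -
  have "d * sol'' x - a * sol' x + h - q * sol x
      = \<alpha> * r1 / q * exp (r1 * x) * (d * r1\<^sup>2 - a * r1 - q)
        + \<beta> * r2 / q * exp (r2 * x) * (d * r2\<^sup>2 - a * r2 - q)"
    using q_pos
    by (simp add: sol_def sol'_def sol''_def field_simps power2_eq_square power3_eq_cube)
  then show ?thesis by (simp add: char_poly_roots)
qed

lemma sol_flux: "d * sol' x - a * sol x = \<alpha> * exp (r1 * x) + \<beta> * exp (r2 * x) - a * h / q"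
proof -
  have "d * sol' x - a * sol x
      = \<alpha> / q * exp (r1 * x) * (d * r1\<^sup>2 - a * r1)
        + \<beta> / q * exp (r2 * x) * (d * r2\<^sup>2 - a * r2) - a * h / q"
    using q_pos by (simp add: sol_def sol'_def field_simps power2_eq_square)
  then show ?thesis using q_pos by (simp add: char_poly_roots)
qed

lemma sol_flux_boundary: "d * sol' 0 - a * sol 0 = 0" "d * sol' X - a * sol X = 0"
  using coeffs_boundary by (simp_all add: sol_flux mult.commute)

lemma sol'_pos: "0 < sol' x"
  using coeffs_pos r2_neg_r1_pos q_pos by (simp add: sol'_def add_pos_pos)

lemma sol_strict_mono: "x < y \<Longrightarrow> sol x < sol y"
  using has_real_derivative_sol sol'_pos by (blast intro: DERIV_pos_imp_increasing)

lemma sol_mono: "x \<le> y \<Longrightarrow> sol x \<le> sol y"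
  using sol_strict_mono by (cases "x = y") (auto intro: less_imp_le)

lemma sol_pos: "0 \<le> x \<Longrightarrow> 0 < sol x"
proof -
  have "0 < a * sol 0"
    using sol_flux_boundary(1) sol'_pos[of 0] d_pos by (metis diff_eq_eq add_0 mult_pos_pos)
  then have "0 < sol 0" using a_pos by (simp add: zero_less_mult_iff)
  then show "0 \<le> x \<Longrightarrow> 0 < sol x" using sol_strict_mono[of 0 x] by (cases "x = 0") auto
qed

lemma twice_deriv_on_sol: "twice_deriv_on X sol sol' sol''"
proof -
  have "continuous_on {0..X} sol'" unfolding sol'_def by (intro continuous_intros)
  then show ?thesis unfolding twice_deriv_on_def
    using has_real_derivative_sol has_real_derivative_sol'
    by (auto intro: has_field_derivative_at_within)
qed

lemma bvp_pos_sol_eq_sol: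
  assumes "bvp_pos_sol d a h q X w" "x \<in> {0..X}"
  shows "w x = sol x"
proof -
  obtain w' w'' where w: "twice_deriv_on X w w' w''"
    and ode: "\<forall>x\<in>{0<..<X}. d * w'' x - a * w' x + h - q * w x = 0"
    and bc: "d * w' 0 - a * w 0 = 0" "d * w' X - a * w X = 0"
    using assms(1) unfolding bvp_pos_sol_iff by blast
  have "w x - sol x = 0"
  proof (rule robin_homogeneous_eq_0
      [OF d_pos q_pos X_pos twice_deriv_on_diff[OF w twice_deriv_on_sol]])
    show "d * (w'' y - sol'' y) - a * (w' y - sol' y) - q * (w y - sol y) = 0"
      if "y \<in> {0<..<X}" for y
      using bspec[OF ode that] sol_ode[of y] unfolding right_diff_distrib by linarith
  qed (use bc sol_flux_boundary assms(2) in \<open>simp_all add: algebra_simps\<close>)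
  then show ?thesis by simp
qed

lemma wbar_eq: "wbar d a h q X = (\<lambda>x. if x \<in> {0..X} then sol x else 0)"
  unfolding wbar_def
proof (rule the_equality)
  have "twice_deriv_on X (\<lambda>x. if x \<in> {0..X} then sol x else 0) sol' sol''"
    by (rule twice_deriv_on_cong[OF twice_deriv_on_sol]) simp
  then show "bvp_pos_sol d a h q X (\<lambda>x. if x \<in> {0..X} then sol x else 0) \<and>
      (\<forall>x. x \<notin> {0..X} \<longrightarrow> (if x \<in> {0..X} then sol x else 0) = 0)"
    unfolding bvp_pos_sol_iff using sol_ode sol_flux_boundary sol_pos X_pos by auto
next
  fix w assume "bvp_pos_sol d a h q X w \<and> (\<forall>x. x \<notin> {0..X} \<longrightarrow> w x = 0)"
  then show "w = (\<lambda>x. if x \<in> {0..X} then sol x else 0)"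
    using bvp_pos_sol_eq_sol by auto
qed

lemma wbar_eq_sol: "x \<in> {0..X} \<Longrightarrow> wbar d a h q X x = sol x"
  by (simp add: wbar_eq)

lemma has_real_derivative_sol_flux:
  "((\<lambda>x. d * sol' x - a * sol x) has_real_derivative q * sol x - h) (at x)"
  using sol_ode[of x]
  by (auto intro!: derivative_eq_intros has_real_derivative_sol has_real_derivative_sol'
      simp: algebra_simps)

lemma sol_flux_neg: "x \<in> {0<..<X} \<Longrightarrow> d * sol' x - a * sol x < 0"
  using q_pos sol_strict_mono has_real_derivative_sol_flux sol_flux_boundary
  by (intro neg_between_zeros_if_deriv_strict_mono
      [of 0 X "\<lambda>x. d * sol' x - a * sol x" "\<lambda>x. q * sol x - h"]) auto

lemma deriv_wbar_bounds:
  assumes "x \<in> {0<..<X}"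
  shows "0 < deriv (wbar d a h q X) x" "deriv (wbar d a h q X) x < a / d * wbar d a h q X x"
proof -
  have "deriv (wbar d a h q X) x = sol' x"
    by (rule DERIV_imp_deriv, rule has_field_derivative_transform_within_open
        [OF has_real_derivative_sol open_greaterThanLessThan assms])
      (auto simp: wbar_eq)
  then show "0 < deriv (wbar d a h q X) x" "deriv (wbar d a h q X) x < a / d * wbar d a h q X x"
    using sol'_pos sol_flux_neg[OF assms] wbar_eq_sol[of x] assms d_pos
    by (simp_all add: field_simps)
qed

lemma sol_bounds:
  assumes "x \<in> {0..X}"
  shows "h / q \<le> exp (a / d * X) * sol x" "sol x \<le> exp (a / d * X) * (h / q)"
proof -
  obtain \<xi> where "0 < \<xi>" "\<xi> < X" and "sol \<xi> = h / q"
    using MVT2[OF X_pos, of _ "\<lambda>x. q * sol x - h"] has_real_derivative_sol_flux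
      sol_flux_boundary q_pos X_pos
    by (fastforce simp: field_simps)
  have "exp (- (a / d) * X) * sol X \<le> exp (- (a / d) * 0) * sol 0"
  proof (rule DERIV_nonpos_imp_nonincreasing[OF less_imp_le[OF X_pos]])
    fix x assume "0 \<le> x" "x \<le> X"
    then have "d * sol' x - a * sol x \<le> 0"
      using sol_flux_neg[of x] sol_flux_boundary by (cases "x = 0 \<or> x = X") auto
    then have "sol' x - a / d * sol x \<le> 0"
      using d_pos by (simp add: field_simps)
    then have "exp (- (a / d) * x) * (sol' x - a / d * sol x) \<le> 0"
      by (simp add: mult_nonneg_nonpos)
    moreover have "((\<lambda>x. exp (- (a / d) * x) * sol x) has_real_derivative
        exp (- (a / d) * x) * (sol' x - a / d * sol x)) (at x)"
      using d_pos by (auto intro!: derivative_eq_intros has_real_derivative_sol simp: algebra_simps)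
    ultimately show "\<exists>l. ((\<lambda>x. exp (- (a / d) * x) * sol x) has_real_derivative l) (at x) \<and> l \<le> 0"
      by blast
  qed
  then have "sol X \<le> exp (a / d * X) * sol 0" by (simp add: exp_minus field_simps)
  moreover have "sol 0 \<le> sol x" "sol x \<le> sol X" "sol 0 \<le> h / q" "h / q \<le> sol X"
    using sol_mono[of 0 x] sol_mono[of x X] sol_mono[of 0 \<xi>] sol_mono[of \<xi> X]
      assms \<open>0 < \<xi>\<close> \<open>\<xi> < X\<close> \<open>sol \<xi> = h / q\<close> by auto
  moreover have "exp (a / d * X) * sol 0 \<le> exp (a / d * X) * sol x"
    "exp (a / d * X) * sol 0 \<le> exp (a / d * X) * (h / q)"
    using calculation by (simp_all only: mult_le_cancel_left_pos exp_gt_zero)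
  ultimately show "h / q \<le> exp (a / d * X) * sol x" "sol x \<le> exp (a / d * X) * (h / q)"
    by linarith+
qed

end

section \<open>Dependence on h and q\<close>

lemma wbar_comparison:
  assumes d: "0 < d" and a: "0 < a" and X: "0 < X"
    and h: "0 < h1" "h1 \<le> h2" and q: "0 < q2" "q2 \<le> q1" and ne: "(h1, q1) \<noteq> (h2, q2)"
    and x: "x \<in> {0..X}"
  shows "wbar d a h1 q1 X x < wbar d a h2 q2 X x"
proof -
  interpret P1: robin_bvp d a h1 q1 X using assms by unfold_locales auto
  interpret P2: robin_bvp d a h2 q2 X using assms by unfold_locales auto
  have "0 < P2.sol x - P1.sol x"
  proof (rule robin_max_principle
      [OF d _ X twice_deriv_on_diff[OF P2.twice_deriv_on_sol P1.twice_deriv_on_sol]])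
    show "d * (P2.sol'' y - P1.sol'' y) - a * (P2.sol' y - P1.sol' y) - q1 * (P2.sol y - P1.sol y)
        + (h2 - h1 + (q1 - q2) * P2.sol y) = 0" for y
      using P1.sol_ode[of y] P2.sol_ode[of y] by (simp add: algebra_simps)
    show "continuous_on {0..X} (\<lambda>y. h2 - h1 + (q1 - q2) * P2.sol y)"
      using twice_deriv_onD(1)[OF P2.twice_deriv_on_sol] by (intro continuous_intros)
    show "0 < h2 - h1 + (q1 - q2) * P2.sol y" if "y \<in> {0..X}" for y
      using P2.sol_pos[of y] that h q ne by (auto simp: add_pos_nonneg add_nonneg_pos)
  qed (use assms P1.sol_flux_boundary P2.sol_flux_boundary in \<open>simp_all add: algebra_simps\<close>)
  then show ?thesis using P1.wbar_eq_sol P2.wbar_eq_sol x by simp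
qed

lemma wbar_bounds:
  assumes "0 < d" "0 < a" "0 < h" "0 < q" "0 < X" "x \<in> {0..X}"
  shows "h / q / exp (a / d * X) \<le> wbar d a h q X x"
    and "\<bar>wbar d a h q X x\<bar> \<le> exp (a / d * X) * (h / q)"
proof -
  interpret robin_bvp d a h q X using assms by unfold_locales
  show "h / q / exp (a / d * X) \<le> wbar d a h q X x"
    using sol_bounds(1)[OF assms(6)] wbar_eq_sol[OF assms(6)] q_pos by (simp add: field_simps)
  show "\<bar>wbar d a h q X x\<bar> \<le> exp (a / d * X) * (h / q)"
    using sol_bounds(2)[OF assms(6)] wbar_eq_sol[OF assms(6)] sol_pos[of x] assms(6) by simp
qed

lemma uniform_limit_wbar_h_at_right_0:
  assumes "0 < d" "0 < a" "0 < q" "0 < X"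
  shows "uniform_limit {0..X} (\<lambda>h. wbar d a h q X) (\<lambda>_. 0) (at_right 0)"
  using wbar_bounds(2)[OF assms(1,2) _ assms(3,4)] assms(3)
  by (intro uniform_limit_null_if_bounded[where g = "\<lambda>h. exp (a / d * X) * (h / q)"])
    (auto intro!: tendsto_eq_intros eventually_mono[OF eventually_at_right_less])

lemma eventually_wbar_gt_h_at_top:
  assumes "0 < d" "0 < a" "0 < q" "0 < X"
  shows "\<forall>\<^sub>F h in at_top. \<forall>x\<in>{0..X}. M < wbar d a h q X x"
  using wbar_bounds(1)[OF assms(1,2) _ assms(3,4)] assms(3)
  by (intro eventually_uniformly_gt_if_lower_bound
      [where g = "\<lambda>h. h * inverse (q * exp (a / d * X))"])
    (auto simp: divide_inverse mult.assoc intro!: filterlim_at_top_mult_tendsto_pos filterlim_ident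
      eventually_mono[OF eventually_gt_at_top[of 0]])

lemma eventually_wbar_gt_q_at_right_0:
  assumes "0 < d" "0 < a" "0 < h" "0 < X"
  shows "\<forall>\<^sub>F q in at_right 0. \<forall>x\<in>{0..X}. M < wbar d a h q X x"
  using wbar_bounds(1)[OF assms(1-3) _ assms(4)] assms(3)
  by (intro eventually_uniformly_gt_if_lower_bound[where g = "\<lambda>q. h / (q * exp (a / d * X))"])
    (auto intro!: LIM_at_top_divide tendsto_eq_intros eventually_mono[OF eventually_at_right_less])

lemma uniform_limit_wbar_q_at_top:
  assumes "0 < d" "0 < a" "0 < h" "0 < X"
  shows "uniform_limit {0..X} (\<lambda>q. wbar d a h q X) (\<lambda>_. 0) at_top"
  using wbar_bounds(2)[OF assms(1-3) _ assms(4)]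
  by (intro uniform_limit_null_if_bounded[where g = "\<lambda>q. exp (a / d * X) * h / q"])
    (auto intro!: real_tendsto_divide_at_top filterlim_ident
      eventually_mono[OF eventually_gt_at_top[of 0]])

theorem lemma3p3:
  fixes d2 a2 h q x2 L :: real
  assumes "d2 > 0" "a2 > 0" "h > 0" "q > 0" "0 < x2" "x2 \<le> L"
  shows
    "(\<forall>x\<in>{0<..<x2}. 0 < deriv (wbar d2 a2 h q x2) x \<and>
        deriv (wbar d2 a2 h q x2) x < a2 / d2 * wbar d2 a2 h q x2 x)
   \<and> (\<forall>h1 h2. 0 < h1 \<and> h1 < h2 \<longrightarrow>
        (\<forall>x\<in>{0<..<x2}. wbar d2 a2 h1 q x2 x < wbar d2 a2 h2 q x2 x))
   \<and> uniform_limit {0..x2} (\<lambda>h'. wbar d2 a2 h' q x2) (\<lambda>_. 0) (at_right 0)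
   \<and> (\<forall>M. \<forall>\<^sub>F h' in at_top. \<forall>x\<in>{0..x2}. wbar d2 a2 h' q x2 x > M)
   \<and> (\<forall>q1 q2. 0 < q1 \<and> q1 < q2 \<longrightarrow>
        (\<forall>x\<in>{0<..<x2}. wbar d2 a2 h q2 x2 x < wbar d2 a2 h q1 x2 x))
   \<and> (\<forall>M. \<forall>\<^sub>F q' in at_right 0. \<forall>x\<in>{0..x2}. wbar d2 a2 h q' x2 x > M)
   \<and> uniform_limit {0..x2} (\<lambda>q'. wbar d2 a2 h q' x2) (\<lambda>_. 0) at_top"
proof -
  note d = assms(1) and a = assms(2) and h = assms(3) and q = assms(4) and X = assms(5)
  have robin: "robin_bvp d2 a2 h q x2" using assms by unfold_locales
  have "wbar d2 a2 h1 q x2 x < wbar d2 a2 h2 q x2 x"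
    if "0 < h1 \<and> h1 < h2" "x \<in> {0<..<x2}" for h1 h2 x
    using that wbar_comparison[OF d a X, of h1 h2 q q x] q by auto
  moreover have "wbar d2 a2 h q2 x2 x < wbar d2 a2 h q1 x2 x"
    if "0 < q1 \<and> q1 < q2" "x \<in> {0<..<x2}" for q1 q2 x
    using that wbar_comparison[OF d a X, of h h q1 q2 x] h by auto
  ultimately show ?thesis
    using robin_bvp.deriv_wbar_bounds[OF robin] uniform_limit_wbar_h_at_right_0[OF d a q X]
      eventually_wbar_gt_h_at_top[OF d a q X] eventually_wbar_gt_q_at_right_0[OF d a h X]
      uniform_limit_wbar_q_at_top[OF d a h X]
    by blast
qed

end
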